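(* Let $p\in\mathbb{N}$, $A>0$, and let $\alpha_1,\dots,\alpha_p,\beta_1,\dots,\beta_p$ be real numbers such that $0<\alpha_1\le\dots\le\alpha_p$, $0<\beta_1\le\dots\le\beta_p$, $\sum_{j=1}^k\beta_j-\sum_{j=1}^k\alpha_j\ge0$ for $k=1,\dots,p$, and $\sum_{j=1}^p(\beta_j-\alpha_j)>0$. Then the function $$z\mapsto{}_p\Psi_p\Big[_{(\beta_1,A),\dots,(\beta_p,A)}^{(\alpha_1,A),\dots,(\alpha_p,A)}\Big|-z\Big]$$ is completely monotonic on $(0,\infty)$.
   Context: The Fox-Wright function is ${}_p\Psi_p\Big[_{(\beta_1,A),\dots,(\beta_p,A)}^{(\alpha_1,A),\dots,(\alpha_p,A)}\Big|z\Big]=\sum_{k=0}^\infty\prod_{i=1}^p\frac{\Gamma(\alpha_i+kA)}{\Gamma(\beta_i+kA)}\frac{z^k}{k!}$. A function $f$ on an interval $I$ is completely monotonic if it is infinitely differentiable and $(-1)^nf^{(n)}\ge0$ on $I$ for all $n\in\mathbb{N}_0$. *)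

theory Defs
  imports "HOL-Analysis.Analysis"
begin

definition fox_wright :: "nat \<Rightarrow> (nat \<Rightarrow> real) \<Rightarrow> (nat \<Rightarrow> real) \<Rightarrow> real \<Rightarrow> real \<Rightarrow> real" where
  "fox_wright p \<alpha> \<beta> A z =
     (\<Sum>k. (\<Prod>i\<in>{1..p}. Gamma (\<alpha> i + real k * A) / Gamma (\<beta> i + real k * A)) * z ^ k / fact k)"

definition completely_monotonic_on :: "(real \<Rightarrow> real) \<Rightarrow> real set \<Rightarrow> bool" where
  "completely_monotonic_on f I \<longleftrightarrow>
     (\<forall>n. \<forall>x\<in>I. (deriv ^^ n) f differentiable (at x)) \<and>
     (\<forall>n. \<forall>x\<in>I. (-1) ^ n * (deriv ^^ n) f x \<ge> 0)"

end

theory Submission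
  imports Defs
begin

text \<open>Write \<open>\<phi> k = \<Prod>\<^sub>i \<Gamma>(\<alpha>\<^sub>i + k A) / \<Gamma>(\<beta>\<^sub>i + k A)\<close>, so that the function is
  \<open>\<Sum>\<^sub>k \<phi> k (-z)\<^sup>k / k!\<close>. Its \<open>n\<close>-th derivative is \<open>(-1)\<^sup>n\<close> times the same series for the
  shifted sequence \<open>\<phi> (k + n)\<close>, so it suffices that such a series is nonnegative for \<open>z \<ge> 0\<close>
  whenever \<open>\<phi>\<close> is a completely monotone sequence (all iterated differences \<open>(-\<Delta>)\<^sup>m \<phi>\<close>
  nonnegative). Complete monotonicity of \<open>\<phi>\<close> comes from Euler's limit formula for \<open>\<Gamma>\<close>:
  \<open>\<phi>\<close> is a limit of products of samples, along arithmetic progressions, of the rational function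
  \<open>\<Prod>\<^sub>i (\<beta>\<^sub>i + x) / (\<alpha>\<^sub>i + x)\<close>. The prefix-sum condition lets this function be factored into
  terms \<open>1 + c / (x + a)\<close> and \<open>1 + c / ((x + a) (x + b))\<close> with \<open>c \<ge> 0\<close>, and complete
  monotonicity of sequences is preserved by sums, products and limits.\<close>

section \<open>Completely monotone sequences\<close>

fun neg_fwd_diff :: "nat \<Rightarrow> (nat \<Rightarrow> real) \<Rightarrow> nat \<Rightarrow> real" where
  "neg_fwd_diff 0 c k = c k"
| "neg_fwd_diff (Suc m) c k = neg_fwd_diff m c k - neg_fwd_diff m c (Suc k)"

definition cm_seq :: "(nat \<Rightarrow> real) \<Rightarrow> bool" where
  "cm_seq c \<longleftrightarrow> (\<forall>m k. 0 \<le> neg_fwd_diff m c k)"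

lemma neg_fwd_diff_add: "neg_fwd_diff m (\<lambda>k. f k + g k) k = neg_fwd_diff m f k + neg_fwd_diff m g k"
  by (induction m arbitrary: k) auto

lemma neg_fwd_diff_cmult: "neg_fwd_diff m (\<lambda>k. a * f k) k = a * neg_fwd_diff m f k"
  by (induction m arbitrary: k) (auto simp: algebra_simps)

lemma neg_fwd_diff_const: "neg_fwd_diff m (\<lambda>k. a) k = (if m = 0 then a else 0)"
  by (induction m arbitrary: k) auto

lemma neg_fwd_diff_shift: "neg_fwd_diff m (\<lambda>j. c (j + n)) k = neg_fwd_diff m c (k + n)"
  by (induction m arbitrary: k) auto

lemma neg_fwd_diff_Suc': "neg_fwd_diff (Suc m) c k = neg_fwd_diff m (neg_fwd_diff 1 c) k"
  by (induction m arbitrary: k) auto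

lemma neg_fwd_diff_binomial:
  "neg_fwd_diff m c k = (\<Sum>j\<le>m. (-1) ^ j * of_nat (m choose j) * c (k + j))"
proof (induction m arbitrary: k)
  case 0
  then show ?case by simp
next
  case (Suc m)
  have shifted: "(\<Sum>j\<le>m. (-1) ^ j * of_nat (m choose j) * c (Suc k + j)) =
      (\<Sum>j\<le>Suc m. - ((-1) ^ j * of_nat (m choose (j - 1)) * c (k + j)) * of_bool (j \<noteq> 0))"
    by (subst sum.atMost_Suc_shift) simp
  have "neg_fwd_diff (Suc m) c k =
      (\<Sum>j\<le>Suc m. (-1) ^ j * of_nat (m choose j) * c (k + j)) -
      (\<Sum>j\<le>m. (-1) ^ j * of_nat (m choose j) * c (Suc k + j))"
    by (simp add: Suc)
  also have "\<dots> = (\<Sum>j\<le>Suc m. (-1) ^ j * (of_nat (m choose j) + of_nat (m choose (j - 1)) * of_bool (j \<noteq> 0)) * c (k + j))"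
    unfolding shifted by (simp add: sum_subtractf[symmetric] algebra_simps)
  also have "\<dots> = (\<Sum>j\<le>Suc m. (-1) ^ j * of_nat (Suc m choose j) * c (k + j))"
  proof (intro sum.cong refl)
    fix j
    show "(-1) ^ j * (of_nat (m choose j) + of_nat (m choose (j - 1)) * of_bool (j \<noteq> 0)) * c (k + j) =
        (-1) ^ j * of_nat (Suc m choose j) * c (k + j)"
      by (cases j) simp_all
  qed
  finally show ?case .
qed

lemma cm_seqD: "cm_seq c \<Longrightarrow> 0 \<le> neg_fwd_diff m c k"
  by (simp add: cm_seq_def)

lemma cm_seq_nonneg: "cm_seq c \<Longrightarrow> 0 \<le> c k"
  using cm_seqD[of c 0] by simp

lemma cm_seq_le_0: "cm_seq c \<Longrightarrow> c k \<le> c 0"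
proof (induction k)
  case (Suc k)
  then show ?case using cm_seqD[of c 1 k] by simp
qed simp

lemma Bseq_cm_seq:
  assumes "cm_seq c"
  shows "Bseq c"
  using assms by (intro BseqI'[of _ "c 0"]) (simp add: cm_seq_nonneg cm_seq_le_0)

lemma cm_seq_shift: "cm_seq c \<Longrightarrow> cm_seq (\<lambda>j. c (j + n))"
  by (simp add: cm_seq_def neg_fwd_diff_shift)

lemma cm_seq_neg_fwd_diff: "cm_seq c \<Longrightarrow> cm_seq (neg_fwd_diff 1 c)"
  unfolding cm_seq_def by (metis neg_fwd_diff_Suc')

lemma cm_seq_add: "cm_seq f \<Longrightarrow> cm_seq g \<Longrightarrow> cm_seq (\<lambda>k. f k + g k)"
  by (simp add: cm_seq_def neg_fwd_diff_add)

lemma cm_seq_cmult: "cm_seq f \<Longrightarrow> 0 \<le> a \<Longrightarrow> cm_seq (\<lambda>k. a * f k)"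
  by (simp add: cm_seq_def neg_fwd_diff_cmult)

lemma cm_seq_const: "0 \<le> a \<Longrightarrow> cm_seq (\<lambda>k. a)"
  by (simp add: cm_seq_def neg_fwd_diff_const)

text \<open>The product rule writes the first difference of \<open>f g\<close> as a sum of two products of
  completely monotone sequences.\<close>
lemma cm_seq_mult:
  assumes "cm_seq f" "cm_seq g"
  shows "cm_seq (\<lambda>k. f k * g k)"
proof -
  have "0 \<le> neg_fwd_diff m (\<lambda>j. f j * g j) k" if "cm_seq f" "cm_seq g" for m f g k
    using that
  proof (induction m arbitrary: f g k)
    case 0
    then show ?case by (simp add: cm_seq_nonneg)
  next
    case (Suc m)
    have "neg_fwd_diff 1 (\<lambda>j. f j * g j) = (\<lambda>j. neg_fwd_diff 1 f j * g j + f (j + 1) * neg_fwd_diff 1 g j)"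
      by (auto simp: algebra_simps)
    then have "neg_fwd_diff (Suc m) (\<lambda>j. f j * g j) k =
        neg_fwd_diff m (\<lambda>j. neg_fwd_diff 1 f j * g j) k + neg_fwd_diff m (\<lambda>j. f (j + 1) * neg_fwd_diff 1 g j) k"
      by (simp only: neg_fwd_diff_Suc' neg_fwd_diff_add)
    moreover have "0 \<le> neg_fwd_diff m (\<lambda>j. neg_fwd_diff 1 f j * g j) k"
      by (intro Suc.IH cm_seq_neg_fwd_diff Suc.prems)
    moreover have "0 \<le> neg_fwd_diff m (\<lambda>j. f (j + 1) * neg_fwd_diff 1 g j) k"
      by (intro Suc.IH cm_seq_neg_fwd_diff cm_seq_shift Suc.prems)
    ultimately show ?case by simp
  qed
  then show ?thesis using assms by (simp add: cm_seq_def)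
qed

lemma cm_seq_prod: "finite S \<Longrightarrow> (\<And>i. i \<in> S \<Longrightarrow> cm_seq (f i)) \<Longrightarrow> cm_seq (\<lambda>k. \<Prod>i\<in>S. f i k)"
  by (induction S rule: finite_induct) (auto intro: cm_seq_mult cm_seq_const)

lemma tendsto_neg_fwd_diff:
  "(\<And>k. (\<lambda>n. F n k) \<longlonglongrightarrow> c k) \<Longrightarrow> (\<lambda>n. neg_fwd_diff m (F n) k) \<longlonglongrightarrow> neg_fwd_diff m c k"
  by (induction m arbitrary: k) (auto intro: tendsto_diff)

lemma cm_seq_limit:
  assumes "\<And>n. cm_seq (F n)" "\<And>k. (\<lambda>n. F n k) \<longlonglongrightarrow> c k"
  shows "cm_seq c"
  unfolding cm_seq_def
proof (intro allI)
  fix m k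
  show "0 \<le> neg_fwd_diff m c k"
    by (rule tendsto_lowerbound[OF tendsto_neg_fwd_diff[OF assms(2)]])
      (use assms(1) cm_seqD in auto)
qed

section \<open>Functions completely monotone along arithmetic progressions\<close>

definition cm_samples :: "(real \<Rightarrow> real) \<Rightarrow> bool" where
  "cm_samples f \<longleftrightarrow> (\<forall>x\<^sub>0\<ge>0. \<forall>h>0. cm_seq (\<lambda>k. f (x\<^sub>0 + real k * h)))"

lemma cm_samples_cong:
  assumes "cm_samples f" "\<And>x. 0 \<le> x \<Longrightarrow> f x = g x"
  shows "cm_samples g"
  unfolding cm_samples_def
proof (intro allI impI)
  fix x\<^sub>0 h :: real
  assume "0 \<le> x\<^sub>0" "0 < h"
  moreover from this have "(\<lambda>k. f (x\<^sub>0 + real k * h)) = (\<lambda>k. g (x\<^sub>0 + real k * h))"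
    by (intro ext assms(2)) simp
  ultimately show "cm_seq (\<lambda>k. g (x\<^sub>0 + real k * h))"
    using assms(1) unfolding cm_samples_def by metis
qed

lemma cm_samples_mult: "cm_samples f \<Longrightarrow> cm_samples g \<Longrightarrow> cm_samples (\<lambda>x. f x * g x)"
  unfolding cm_samples_def by (auto intro: cm_seq_mult)

lemma cm_samples_add: "cm_samples f \<Longrightarrow> cm_samples g \<Longrightarrow> cm_samples (\<lambda>x. f x + g x)"
  unfolding cm_samples_def by (auto intro: cm_seq_add)

lemma cm_samples_cmult: "cm_samples f \<Longrightarrow> 0 \<le> a \<Longrightarrow> cm_samples (\<lambda>x. a * f x)"
  unfolding cm_samples_def by (auto intro: cm_seq_cmult)

lemma cm_samples_const: "0 \<le> a \<Longrightarrow> cm_samples (\<lambda>x. a)"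
  unfolding cm_samples_def by (auto intro: cm_seq_const)

lemma neg_fwd_diff_inverse:
  assumes "0 < a" "0 < h"
  shows "neg_fwd_diff m (\<lambda>k. 1 / (a + real k * h)) k =
    fact m * h ^ m / (\<Prod>j\<le>m. a + real (k + j) * h)"
proof (induction m arbitrary: k)
  case 0
  then show ?case by simp
next
  case (Suc m)
  define P where "P k = (\<Prod>j\<le>m. a + real (k + j) * h)" for k
  have pos: "0 < a + real i * h" for i
    using assms by (simp add: add_pos_nonneg)
  have P_pos: "0 < P i" for i
    unfolding P_def by (intro prod_pos ballI pos)
  define D where "D = (\<Prod>j\<le>Suc m. a + real (k + j) * h)"
  have "D = P k * (a + real (k + Suc m) * h)"
    by (simp add: D_def P_def)
  then have "1 / P k = (a + real (k + Suc m) * h) / D"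
    using P_pos[of k] pos[of "k + Suc m"] by simp
  moreover have "D = (a + real k * h) * P (Suc k)"
    unfolding D_def P_def by (subst prod.atMost_Suc_shift) simp
  then have "1 / P (Suc k) = (a + real k * h) / D"
    using P_pos[of "Suc k"] pos[of k] by simp
  ultimately have telescope: "1 / P k - 1 / P (Suc k) = real (Suc m) * h / D"
    by (simp add: diff_divide_distrib[symmetric] algebra_simps)
  have "neg_fwd_diff (Suc m) (\<lambda>k. 1 / (a + real k * h)) k = fact m * h ^ m * (1 / P k - 1 / P (Suc k))"
    by (simp add: Suc P_def right_diff_distrib)
  also have "\<dots> = fact (Suc m) * h ^ Suc m / D"
    unfolding telescope by (simp add: algebra_simps)
  finally show ?case
    by (simp add: D_def)
qed

lemma cm_samples_inverse:
  assumes "0 < a"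
  shows "cm_samples (\<lambda>x. 1 / (x + a))"
  unfolding cm_samples_def cm_seq_def
proof (intro allI impI)
  fix x\<^sub>0 h :: real and m k
  assume "0 \<le> x\<^sub>0" "0 < h"
  then have "0 < x\<^sub>0 + a" "0 < x\<^sub>0 + a + real i * h" for i
    using assms by (simp_all add: add_pos_nonneg)
  with \<open>0 < h\<close> have "0 \<le> neg_fwd_diff m (\<lambda>k. 1 / ((x\<^sub>0 + a) + real k * h)) k"
    by (subst neg_fwd_diff_inverse) (auto intro!: divide_nonneg_pos prod_pos simp del: of_nat_add)
  then show "0 \<le> neg_fwd_diff m (\<lambda>k. 1 / (x\<^sub>0 + real k * h + a)) k"
    by (simp add: algebra_simps)
qed

lemma cm_samples_ratio:
  assumes "0 < a" "a \<le> b"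
  shows "cm_samples (\<lambda>x. (b + x) / (a + x))"
proof -
  have "cm_samples (\<lambda>x. 1 + (b - a) * (1 / (x + a)))"
    using assms by (intro cm_samples_add cm_samples_const cm_samples_cmult cm_samples_inverse) auto
  then show ?thesis
    by (rule cm_samples_cong) (use assms in \<open>auto simp: field_simps\<close>)
qed

text \<open>The product of the two ratios is \<open>1 + (b - a) (c - b) / ((x + a) (x + c))\<close>.\<close>
lemma cm_samples_ratio_pair:
  assumes "0 < a" "a \<le> b" "b \<le> c"
  shows "cm_samples (\<lambda>x. (b + x) / (a + x) * ((a + c - b) + x) / (c + x))"
proof -
  have "cm_samples (\<lambda>x. 1 + ((b - a) * (c - b)) * ((1 / (x + a)) * (1 / (x + c))))"
    using assms
    by (intro cm_samples_add cm_samples_const cm_samples_cmult cm_samples_inverse cm_samples_mult) auto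
  then show ?thesis
  proof (rule cm_samples_cong)
    fix x :: real
    assume "0 \<le> x"
    with assms have "0 < (a + x) * (c + x)" by simp
    moreover have "(b + x) * ((a + c - b) + x) = (a + x) * (c + x) + (b - a) * (c - b)"
      by algebra
    ultimately show "1 + ((b - a) * (c - b)) * ((1 / (x + a)) * (1 / (x + c))) =
        (b + x) / (a + x) * ((a + c - b) + x) / (c + x)"
      by (simp add: field_simps)
  qed
qed

section \<open>Products of ratios of linear factors\<close>

definition factor_ratio :: "real list \<Rightarrow> real list \<Rightarrow> real \<Rightarrow> real" where
  "factor_ratio a b x = (\<Prod>t\<leftarrow>b. t + x) / (\<Prod>t\<leftarrow>a. t + x)"

definition prefix_sums_le :: "real list \<Rightarrow> real list \<Rightarrow> bool" where
  "prefix_sums_le a b \<longleftrightarrow> (\<forall>k. sum_list (take k a) \<le> sum_list (take k b))"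

lemma factor_ratio_Cons:
  "factor_ratio (a # as) (b # bs) x = (b + x) / (a + x) * factor_ratio as bs x"
  by (simp add: factor_ratio_def)

lemma factor_ratio_exchange:
  assumes "e + x \<noteq> 0"
  shows "factor_ratio (xs @ c # zs) b x = (e + x) / (c + x) * factor_ratio (xs @ e # zs) b x"
  using assms by (simp add: factor_ratio_def)

lemma sum_take_mono:
  fixes xs ys :: "real list"
  shows "list_all2 (\<le>) xs ys \<Longrightarrow> sum_list (take k xs) \<le> sum_list (take k ys)"
proof (induction xs ys arbitrary: k rule: list_all2_induct)
  case (Cons x xs y ys)
  then show ?case by (cases k) (simp_all add: add_mono)
qed simp

lemma prefix_sums_le_pointwise:
  "list_all2 (\<le>) xs ys \<Longrightarrow> prefix_sums_le xs ys"
  by (simp add: prefix_sums_le_def sum_take_mono)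

text \<open>From the position of \<open>c\<close> on, both prefix sums are those of the original lists minus \<open>b\<^sub>1\<close>.\<close>
lemma prefix_sums_le_exchange:
  assumes prefix: "prefix_sums_le (a\<^sub>1 # xs @ c # zs) (b\<^sub>1 # bs)"
    and "length xs \<le> length bs" "\<forall>t\<in>set xs. t \<le> b\<^sub>1" "\<forall>t\<in>set bs. b\<^sub>1 \<le> t"
  shows "prefix_sums_le (xs @ (a\<^sub>1 + c - b\<^sub>1) # zs) bs"
  unfolding prefix_sums_le_def
proof
  fix k
  show "sum_list (take k (xs @ (a\<^sub>1 + c - b\<^sub>1) # zs)) \<le> sum_list (take k bs)"
  proof (cases "k \<le> length xs")
    case True
    have "xs ! i \<le> bs ! i" if "i < length xs" for i
    proof -
      have "xs ! i \<le> b\<^sub>1" using assms(3) that by simp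
      also have "b\<^sub>1 \<le> bs ! i" using assms(2,4) that by simp
      finally show ?thesis .
    qed
    then have "list_all2 (\<le>) xs (take (length xs) bs)"
      using assms(2) by (intro list_all2_all_nthI) auto
    then have "sum_list (take k xs) \<le> sum_list (take k (take (length xs) bs))"
      by (rule sum_take_mono)
    then show ?thesis
      using True by (simp add: min_def)
  next
    case False
    then obtain r where "k = length xs + Suc r"
      by (metis add_Suc_right less_imp_Suc_add not_le)
    with prefix show ?thesis
      unfolding prefix_sums_le_def by (auto dest: spec[of _ "Suc k"])
  qed
qed

text \<open>Induction on \<open>b\<close>: the smallest \<open>b\<^sub>1\<close> is paired with \<open>a\<^sub>1\<close>; if some later \<open>c\<close> in \<open>a\<close>
  is at least \<open>b\<^sub>1\<close>, the first such \<open>c\<close> is replaced by \<open>a\<^sub>1 + c - b\<^sub>1\<close> so that the two split-off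
  ratios together have the shape treated in \<open>cm_samples_ratio_pair\<close>.\<close>
lemma cm_samples_factor_ratio:
  assumes "length a = length b" "sorted b" "\<forall>t\<in>set a. 0 < t" "prefix_sums_le a b"
  shows "cm_samples (factor_ratio a b)"
  using assms
proof (induction b arbitrary: a)
  case Nil
  then have "factor_ratio a [] = (\<lambda>x. 1)"
    by (auto simp: factor_ratio_def)
  then show ?case
    by (simp add: cm_samples_const)
next
  case (Cons b\<^sub>1 bs)
  from Cons.prems(1) obtain a\<^sub>1 rest where a: "a = a\<^sub>1 # rest"
    by (cases a) auto
  have "a\<^sub>1 \<le> b\<^sub>1" "0 < a\<^sub>1"
    using Cons.prems(3,4) by (auto simp: a prefix_sums_le_def dest: spec[of _ 1])
  have rest_pos: "\<forall>t\<in>set rest. 0 < t" and len: "length rest = length bs"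
    using Cons.prems(1,3) by (auto simp: a)
  have bs_ge: "\<forall>t\<in>set bs. b\<^sub>1 \<le> t" and "sorted bs"
    using Cons.prems(2) by simp_all
  consider "\<forall>t\<in>set rest. t < b\<^sub>1"
    | xs c zs where "rest = xs @ c # zs" "b\<^sub>1 \<le> c" "\<forall>t\<in>set xs. t < b\<^sub>1"
    by (metis not_le split_list_first_prop)
  then show ?case
  proof cases
    case 1
    have "rest ! i \<le> bs ! i" if "i < length rest" for i
    proof -
      have "rest ! i < b\<^sub>1" using 1 that by simp
      also have "b\<^sub>1 \<le> bs ! i" using bs_ge len that by simp
      finally show ?thesis by simp
    qed
    then have "list_all2 (\<le>) rest bs"
      using len by (intro list_all2_all_nthI) auto
    then have "cm_samples (factor_ratio rest bs)"
      by (intro Cons.IH len \<open>sorted bs\<close> rest_pos prefix_sums_le_pointwise)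
    then have "cm_samples (\<lambda>x. (b\<^sub>1 + x) / (a\<^sub>1 + x) * factor_ratio rest bs x)"
      by (intro cm_samples_mult cm_samples_ratio \<open>0 < a\<^sub>1\<close> \<open>a\<^sub>1 \<le> b\<^sub>1\<close>)
    then show ?thesis
      by (simp add: a factor_ratio_Cons)
  next
    case 2
    define e where "e = a\<^sub>1 + c - b\<^sub>1"
    have "0 < e"
      using \<open>0 < a\<^sub>1\<close> \<open>b\<^sub>1 \<le> c\<close> by (simp add: e_def)
    have "prefix_sums_le (xs @ e # zs) bs"
      unfolding e_def using Cons.prems(4) 2 len bs_ge
      by (intro prefix_sums_le_exchange) (auto simp: a)
    then have "cm_samples (factor_ratio (xs @ e # zs) bs)"
      using len rest_pos \<open>0 < e\<close> by (intro Cons.IH \<open>sorted bs\<close>) (auto simp: 2)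
    then have "cm_samples (\<lambda>x. (b\<^sub>1 + x) / (a\<^sub>1 + x) * (e + x) / (c + x) * factor_ratio (xs @ e # zs) bs x)"
      unfolding e_def
      by (intro cm_samples_mult cm_samples_ratio_pair \<open>0 < a\<^sub>1\<close> \<open>a\<^sub>1 \<le> b\<^sub>1\<close> \<open>b\<^sub>1 \<le> c\<close>)
    then show ?thesis
    proof (rule cm_samples_cong)
      fix x :: real
      assume "0 \<le> x"
      with \<open>0 < e\<close> have "e + x \<noteq> 0" by simp
      then show "(b\<^sub>1 + x) / (a\<^sub>1 + x) * (e + x) / (c + x) * factor_ratio (xs @ e # zs) bs x =
          factor_ratio a (b\<^sub>1 # bs) x"
        by (simp add: a 2 factor_ratio_Cons factor_ratio_exchange[of e x xs c zs])
    qed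
  qed
qed

lemma prod_list_map_upt: "prod_list (map f [1..<Suc p]) = (\<Prod>i\<in>{1..p}. f i)"
  by (metis distinct_upt prod.distinct_set_conv_list set_upt atLeastLessThanSuc_atLeastAtMost)

lemma factor_ratio_map_upt:
  "factor_ratio (map \<alpha> [1..<Suc p]) (map \<beta> [1..<Suc p]) = (\<lambda>x. \<Prod>i\<in>{1..p}. (\<beta> i + x) / (\<alpha> i + x))"
  unfolding factor_ratio_def map_map o_def prod_list_map_upt by (simp add: prod_dividef)

lemma sum_take_map_upt:
  fixes \<alpha> :: "nat \<Rightarrow> real"
  shows "sum_list (take k (map \<alpha> [1..<Suc p])) = (\<Sum>j=1..min k p. \<alpha> j)"
proof -
  have "take k [1..<Suc p] = [1..<Suc (min k p)]"
    by (cases "k \<le> p") (simp_all del: upt_Suc add: take_upt min_def)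
  then show ?thesis
    by (metis take_map distinct_upt sum.distinct_set_conv_list set_upt atLeastLessThanSuc_atLeastAtMost)
qed

lemma cm_samples_prod_ratio:
  fixes \<alpha> \<beta> :: "nat \<Rightarrow> real"
  assumes "\<forall>i\<in>{1..p}. 0 < \<alpha> i"
    and "\<forall>i j. 1 \<le> i \<longrightarrow> i \<le> j \<longrightarrow> j \<le> p \<longrightarrow> \<beta> i \<le> \<beta> j"
    and "\<forall>k\<in>{1..p}. (\<Sum>j=1..k. \<alpha> j) \<le> (\<Sum>j=1..k. \<beta> j)"
  shows "cm_samples (\<lambda>x. \<Prod>i\<in>{1..p}. (\<beta> i + x) / (\<alpha> i + x))"
proof -
  have "prefix_sums_le (map \<alpha> [1..<Suc p]) (map \<beta> [1..<Suc p])"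
    unfolding prefix_sums_le_def sum_take_map_upt
  proof
    fix k
    show "(\<Sum>j=1..min k p. \<alpha> j) \<le> (\<Sum>j=1..min k p. \<beta> j)"
      using assms(3) by (cases "min k p = 0") auto
  qed
  moreover have "sorted (map \<beta> [1..<Suc p])"
    unfolding sorted_iff_nth_mono using assms(2) by (auto simp del: upt_Suc simp add: nth_upt)
  ultimately have "cm_samples (factor_ratio (map \<alpha> [1..<Suc p]) (map \<beta> [1..<Suc p]))"
    using assms(1) by (intro cm_samples_factor_ratio) auto
  then show ?thesis
    by (simp only: factor_ratio_map_upt)
qed

section \<open>The ratio of Gamma products\<close>

lemma Gamma_series_quotient:
  fixes a b :: real
  assumes "0 < a" "0 < b"
  shows "Gamma_series a N / Gamma_series b N =
    exp ((a - b) * ln (real N)) * (\<Prod>j<Suc N. (b + real j) / (a + real j))"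
proof -
  have "0 < pochhammer a (Suc N)" "0 < pochhammer b (Suc N)"
    using assms by (auto intro: pochhammer_pos)
  then have "Gamma_series a N / Gamma_series b N =
      exp (a * ln (real N)) / exp (b * ln (real N)) * (pochhammer b (Suc N) / pochhammer a (Suc N))"
    unfolding Gamma_series_def by (simp add: field_simps)
  also have "exp (a * ln (real N)) / exp (b * ln (real N)) = exp ((a - b) * ln (real N))"
    by (simp add: exp_diff[symmetric] algebra_simps)
  also have "pochhammer b (Suc N) / pochhammer a (Suc N) = (\<Prod>j<Suc N. (b + real j) / (a + real j))"
    by (simp add: pochhammer_prod prod_dividef atLeast0LessThan)
  finally show ?thesis .
qed

definition gamma_ratio_seq :: "nat \<Rightarrow> (nat \<Rightarrow> real) \<Rightarrow> (nat \<Rightarrow> real) \<Rightarrow> real \<Rightarrow> nat \<Rightarrow> real" where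
  "gamma_ratio_seq p \<alpha> \<beta> A k = (\<Prod>i\<in>{1..p}. Gamma (\<alpha> i + real k * A) / Gamma (\<beta> i + real k * A))"

text \<open>Euler's limit formula makes the sequence the pointwise limit of positive constant multiples
  of \<open>\<Prod>\<^sub>j\<^sub>\<le>\<^sub>N R (j + k A)\<close>, where \<open>R x = \<Prod>\<^sub>i (\<beta>\<^sub>i + x) / (\<alpha>\<^sub>i + x)\<close>.\<close>
lemma cm_seq_gamma_ratio_seq:
  fixes \<alpha> \<beta> :: "nat \<Rightarrow> real"
  assumes "0 < A"
    and \<alpha>_pos: "\<forall>i\<in>{1..p}. 0 < \<alpha> i" and \<beta>_pos: "\<forall>i\<in>{1..p}. 0 < \<beta> i"
    and "\<forall>i j. 1 \<le> i \<longrightarrow> i \<le> j \<longrightarrow> j \<le> p \<longrightarrow> \<beta> i \<le> \<beta> j"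
    and "\<forall>k\<in>{1..p}. (\<Sum>j=1..k. \<alpha> j) \<le> (\<Sum>j=1..k. \<beta> j)"
  shows "cm_seq (gamma_ratio_seq p \<alpha> \<beta> A)"
proof -
  define R where "R x = (\<Prod>i\<in>{1..p}. (\<beta> i + x) / (\<alpha> i + x))" for x
  define F where "F N k =
    (\<Prod>i\<in>{1..p}. Gamma_series (\<alpha> i + real k * A) N / Gamma_series (\<beta> i + real k * A) N)" for N k
  have R: "cm_samples R"
    unfolding R_def using assms by (intro cm_samples_prod_ratio) auto
  show ?thesis
  proof (rule cm_seq_limit)
    fix N
    have "F N = (\<lambda>k. (\<Prod>i\<in>{1..p}. exp ((\<alpha> i - \<beta> i) * ln (real N))) * (\<Prod>j<Suc N. R (real j + real k * A)))"
    proof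
      fix k
      have "F N k = (\<Prod>i\<in>{1..p}. exp ((\<alpha> i - \<beta> i) * ln (real N)) *
          (\<Prod>j<Suc N. (\<beta> i + real k * A + real j) / (\<alpha> i + real k * A + real j)))"
        unfolding F_def using \<alpha>_pos \<beta>_pos \<open>0 < A\<close>
        by (intro prod.cong refl) (subst Gamma_series_quotient; auto intro!: add_pos_nonneg)
      also have "\<dots> = (\<Prod>i\<in>{1..p}. exp ((\<alpha> i - \<beta> i) * ln (real N))) * (\<Prod>j<Suc N. R (real j + real k * A))"
        unfolding R_def prod.distrib by (subst prod.swap) (simp add: algebra_simps)
      finally show "F N k = \<dots>" .
    qed
    moreover have "cm_seq (\<lambda>k. (\<Prod>i\<in>{1..p}. exp ((\<alpha> i - \<beta> i) * ln (real N))) * (\<Prod>j<Suc N. R (real j + real k * A)))"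
      using R \<open>0 < A\<close> unfolding cm_samples_def
      by (intro cm_seq_cmult cm_seq_prod) (auto intro: prod_nonneg)
    ultimately show "cm_seq (F N)"
      by (simp only:)
  next
    fix k
    show "(\<lambda>N. F N k) \<longlonglongrightarrow> gamma_ratio_seq p \<alpha> \<beta> A k"
      unfolding F_def gamma_ratio_seq_def
    proof (intro tendsto_prod tendsto_divide Gamma_series_LIMSEQ)
      fix i
      assume "i \<in> {1..p}"
      with \<beta>_pos \<open>0 < A\<close> have "0 < \<beta> i + real k * A"
        by (auto intro: add_pos_nonneg)
      then show "Gamma (\<beta> i + real k * A) \<noteq> 0"
        using Gamma_real_pos less_irrefl by metis
    qed
  qed
qed

section \<open>Exponential series with completely monotone coefficients\<close>

definition alt_exp_series :: "(nat \<Rightarrow> real) \<Rightarrow> real \<Rightarrow> real" where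
  "alt_exp_series c z = (\<Sum>k. c k * (- z) ^ k / fact k)"

lemma summable_norm_exp_series_Bseq:
  fixes c :: "nat \<Rightarrow> real"
  assumes "Bseq c"
  shows "summable (\<lambda>k. norm (c k * y ^ k / fact k))"
proof -
  obtain K where K: "\<And>k. norm (c k) \<le> K"
    using assms by (auto simp: Bseq_def)
  have "summable (\<lambda>k. K * (\<bar>y\<bar> ^ k / fact k))"
    using summable_exp_generic[of "\<bar>y\<bar>"] by (intro summable_mult) (simp add: field_simps)
  then show ?thesis
    by (rule summable_comparison_test[rotated])
      (use K in \<open>auto simp: abs_mult power_abs intro!: mult_right_mono divide_right_mono\<close>)
qed

lemma summable_alt_exp_series:
  fixes c :: "nat \<Rightarrow> real"
  shows "Bseq c \<Longrightarrow> summable (\<lambda>k. c k * (- z) ^ k / fact k)"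
  by (rule summable_norm_cancel[OF summable_norm_exp_series_Bseq])

lemma alt_exp_series_cmult:
  assumes "Bseq c"
  shows "alt_exp_series (\<lambda>k. a * c k) z = a * alt_exp_series c z"
  using suminf_mult[OF summable_alt_exp_series[OF assms, of z], of a]
  unfolding alt_exp_series_def by (simp add: mult_ac)

text \<open>The Cauchy product with \<open>exp z = \<Sum> z\<^sup>k / k!\<close> has the nonnegative terms
  \<open>z\<^sup>m / m! \<cdot> (-\<Delta>)\<^sup>m c 0\<close> (by the binomial expansion of the iterated difference),
  so \<open>exp z\<close> times the series is nonnegative.\<close>
lemma alt_exp_series_nonneg:
  assumes c: "cm_seq c" and "0 \<le> z"
  shows "0 \<le> alt_exp_series c z"
proof -
  let ?a = "\<lambda>k. c k * (- z) ^ k / fact k" and ?b = "\<lambda>k. z ^ k / fact k"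
  have "summable (\<lambda>k. norm (?a k))"
    using Bseq_cm_seq[OF c] by (rule summable_norm_exp_series_Bseq)
  moreover have "summable (\<lambda>k. norm (?b k))"
    using summable_norm_exp_series_Bseq[of "\<lambda>_. 1" z] by simp
  ultimately have "(\<lambda>m. \<Sum>i\<le>m. ?a i * ?b (m - i)) sums ((\<Sum>k. ?a k) * (\<Sum>k. ?b k))"
    by (rule Cauchy_product_sums)
  moreover have "(\<Sum>k. ?b k) = exp z"
    using exp_converges[of z] by (simp add: sums_iff divide_inverse mult.commute)
  ultimately have sums: "(\<lambda>m. \<Sum>i\<le>m. ?a i * ?b (m - i)) sums (alt_exp_series c z * exp z)"
    by (simp add: alt_exp_series_def)
  have "(\<Sum>i\<le>m. ?a i * ?b (m - i)) = z ^ m / fact m * neg_fwd_diff m c 0" for m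
    unfolding neg_fwd_diff_binomial sum_distrib_left
  proof (rule sum.cong[OF refl])
    fix i
    assume "i \<in> {..m}"
    then have "i \<le> m" by simp
    then have zz: "z ^ i * z ^ (m - i) = z ^ m"
      by (simp add: power_add[symmetric])
    from \<open>i \<le> m\<close> have "real (m choose i) = fact m / (fact i * fact (m - i))"
      by (simp add: binomial_fact)
    then show "?a i * ?b (m - i) = z ^ m / fact m * ((- 1) ^ i * of_nat (m choose i) * c (0 + i))"
      by (simp add: power_minus[of z] zz[symmetric] field_simps)
  qed
  then have "0 \<le> (\<Sum>i\<le>m. ?a i * ?b (m - i))" for m
    using c \<open>0 \<le> z\<close> by (simp add: cm_seqD)
  then have "0 \<le> alt_exp_series c z * exp z"
    using suminf_nonneg[OF sums_summable[OF sums]] sums_unique[OF sums] by simp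
  then show ?thesis
    by (simp add: zero_le_mult_iff)
qed

lemma has_real_derivative_alt_exp_series:
  assumes "Bseq c"
  shows "(alt_exp_series c has_real_derivative alt_exp_series (\<lambda>k. - c (Suc k)) z) (at z)"
proof -
  define a where "a k = c k * (-1) ^ k / fact k" for k
  have series: "alt_exp_series d = (\<lambda>y. \<Sum>k. d k * (-1) ^ k / fact k * y ^ k)" for d
  proof
    fix y
    show "alt_exp_series d y = (\<Sum>k. d k * (-1) ^ k / fact k * y ^ k)"
      unfolding alt_exp_series_def by (simp add: power_minus[of y] mult_ac)
  qed
  have "summable (\<lambda>k. a k * y ^ k)" for y
    using summable_alt_exp_series[OF assms, of y] by (simp add: a_def power_minus[of y] mult_ac)
  then have "((\<lambda>y. \<Sum>k. a k * y ^ k) has_real_derivative (\<Sum>k. diffs a k * z ^ k)) (at z)"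
    by (rule termdiffs_strong_converges_everywhere)
  moreover have "diffs a k = - c (Suc k) * (-1) ^ k / fact k" for k
    by (simp add: diffs_def a_def divide_simps del: of_nat_Suc)
  ultimately show ?thesis
    by (simp add: series a_def)
qed

lemma higher_deriv_alt_exp_series:
  assumes "Bseq c"
  shows "(deriv ^^ n) (alt_exp_series c) = alt_exp_series (\<lambda>k. (-1) ^ n * c (k + n))"
proof (induction n)
  case 0
  then show ?case by simp
next
  case (Suc n)
  have "Bseq (\<lambda>k. (-1) ^ n * c (k + n))"
    using assms by (simp add: Bseq_cmult_iff Bseq_ignore_initial_segment)
  then have "deriv (alt_exp_series (\<lambda>k. (-1) ^ n * c (k + n))) =
      alt_exp_series (\<lambda>k. - ((-1) ^ n * c (Suc k + n)))"
    by (intro ext DERIV_imp_deriv has_real_derivative_alt_exp_series)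
  then show ?case
    by (simp add: Suc)
qed

lemma completely_monotonic_on_alt_exp_series:
  assumes "cm_seq c"
  shows "completely_monotonic_on (alt_exp_series c) {0..}"
  unfolding completely_monotonic_on_def
proof (intro conjI allI ballI)
  fix n and x :: real
  have "Bseq c" and Bseq_shift: "Bseq (\<lambda>k. c (k + n))"
    using Bseq_cm_seq[OF assms] by (simp_all add: Bseq_ignore_initial_segment)
  then have "Bseq (\<lambda>k. (-1) ^ n * c (k + n))"
    by (simp add: Bseq_cmult_iff)
  then show "(deriv ^^ n) (alt_exp_series c) differentiable (at x)"
    unfolding higher_deriv_alt_exp_series[OF \<open>Bseq c\<close>] real_differentiable_def
    by (blast intro: has_real_derivative_alt_exp_series)
  assume "x \<in> {0..}"
  have "(-1) ^ n * (deriv ^^ n) (alt_exp_series c) x = alt_exp_series (\<lambda>k. c (k + n)) x"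
    unfolding higher_deriv_alt_exp_series[OF \<open>Bseq c\<close>] alt_exp_series_cmult[OF Bseq_shift]
    by (simp flip: power_mult_distrib)
  also have "0 \<le> \<dots>"
    using \<open>x \<in> {0..}\<close> by (intro alt_exp_series_nonneg cm_seq_shift assms) simp
  finally show "0 \<le> (-1) ^ n * (deriv ^^ n) (alt_exp_series c) x" .
qed

lemma completely_monotonic_on_subset:
  "completely_monotonic_on f I \<Longrightarrow> J \<subseteq> I \<Longrightarrow> completely_monotonic_on f J"
  unfolding completely_monotonic_on_def by blast

theorem theorem2:
  fixes p :: nat and A :: real and \<alpha> \<beta> :: "nat \<Rightarrow> real"
  assumes "A > 0"
    and "\<forall>i\<in>{1..p}. \<alpha> i > 0" and "\<forall>i\<in>{1..p}. \<beta> i > 0"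
    and "\<forall>i j. 1 \<le> i \<longrightarrow> i \<le> j \<longrightarrow> j \<le> p \<longrightarrow> \<alpha> i \<le> \<alpha> j"
    and "\<forall>i j. 1 \<le> i \<longrightarrow> i \<le> j \<longrightarrow> j \<le> p \<longrightarrow> \<beta> i \<le> \<beta> j"
    and "\<forall>k\<in>{1..p}. (\<Sum>j=1..k. \<beta> j) - (\<Sum>j=1..k. \<alpha> j) \<ge> 0"
    and "(\<Sum>j=1..p. \<beta> j - \<alpha> j) > 0"
  shows "completely_monotonic_on (\<lambda>z. fox_wright p \<alpha> \<beta> A (- z)) {0<..}"
proof -
  have "cm_seq (gamma_ratio_seq p \<alpha> \<beta> A)"
    using assms(1-3,5,6) by (intro cm_seq_gamma_ratio_seq) auto
  then have "completely_monotonic_on (alt_exp_series (gamma_ratio_seq p \<alpha> \<beta> A)) {0<..}"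
    by (rule completely_monotonic_on_subset[OF completely_monotonic_on_alt_exp_series]) auto
  moreover have "(\<lambda>z. fox_wright p \<alpha> \<beta> A (- z)) = alt_exp_series (gamma_ratio_seq p \<alpha> \<beta> A)"
    by (simp add: fun_eq_iff fox_wright_def alt_exp_series_def gamma_ratio_seq_def)
  ultimately show ?thesis
    by simp
qed

end
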